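(* Fix a finite alphabet $\mathcal{X}$, integers $M_1\ge M_2\ge K\ge1$, reals $\alpha,\beta>0$, and let $\xi_N=\lceil\alpha N\rceil$, $\chi_N=\lceil\beta N\rceil$. For each $N$, let $\Phi_{\mathrm{FL},N}$ be the fixed-length test which observes $(\mathbf{X}^{\xi_N},\mathbf{Y}^{\chi_N})$ and decides $\mathrm{H}_l^K$ with $l=\arg\min_{t\in[T_K]}\mathrm{S}_t^K(\mathbf{X}^{\xi_N},\mathbf{Y}^{\chi_N})$. Then for every $l\in[T_K]$ and every $(P^{M_1},Q^{M_2})\in\mathcal{P}_l^K$, $$\liminf_{N\to\infty}\frac{-\log\beta(\Phi_{\mathrm{FL},N}|P^{M_1},Q^{M_2})}{N}\ge E_{\mathrm{f}}(l,K,P^{M_1},Q^{M_2}).$$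
   Context: Model: $\mathcal{P}(\mathcal{X})$ is the set of distributions on $\mathcal{X}$. For $i\in[M_1]$, $X_i^{\xi_N}=(X_{i,1},\dots,X_{i,\xi_N})$ is i.i.d. $P_i$; for $j\in[M_2]$, $Y_j^{\chi_N}$ is i.i.d. $Q_j$; all independent; within each database the distributions are distinct. A $K$-match is a set of $K$ pairs in $[M_1]\times[M_2]$ with no two pairs sharing a first or a second coordinate; there are $T_K=\binom{M_1}{K}\binom{M_2}{K}K!$ of them, $\mathcal{M}_1^K,\dots,\mathcal{M}_{T_K}^K$. $\mathcal{P}_l^K:=\{(\tilde P^{M_1},\tilde Q^{M_2}):\tilde P_i=\tilde Q_j\text{ iff }(i,j)\in\mathcal{M}_l^K\}$ (hypothesis $\mathrm{H}_l^K$). Mismatch probability $\beta(\Phi|P^{M_1},Q^{M_2})$ = probability, under $(P^{M_1},Q^{M_2})\in\mathcal{P}_l^K$, that the decision differs from $\mathrm{H}_l^K$. Notation: $\hat T_{x^n}$ is the empirical distribution (type) of $x^n$; $D$ is KL divergence; $R_{\alpha,\beta}^{P,Q}=\frac{\alpha P+\beta Q}{\alpha+\beta}$; $\mathrm{GJS}(P,Q,\alpha,\beta)=\alpha D(P\|R_{\alpha,\beta}^{P,Q})+\beta D(Q\|R_{\alpha,\beta}^{P,Q})$; $\mathrm{G}_t^K(P^{M_1},Q^{M_2},\alpha,\beta)=\sum_{(i,j)\in\mathcal{M}_t^K}\mathrm{GJS}(P_i,Q_j,\alpha,\beta)$; $\mathrm{S}_t^K(\mathbf{x}^{\xi_N},\mathbf{y}^{\chi_N})=\mathrm{G}_t^K((\hat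 T_{x_i^{\xi_N}})_i,(\hat T_{y_j^{\chi_N}})_j,\alpha,\beta)$. $E(P^{M_1},Q^{M_2},\Omega^{M_1},\Psi^{M_2},\alpha,\beta)=\sum_{i\in[M_1]}\alpha D(\Omega_i\|P_i)+\sum_{j\in[M_2]}\beta D(\Psi_j\|Q_j)$, and $E_{\mathrm{f}}(l,K,P^{M_1},Q^{M_2}):=\min_{t\in[T_K],t\ne l}\ \min_{(\Omega^{M_1},\Psi^{M_2})\in\mathcal{P}(\mathcal{X})^{M_1+M_2}:\ \mathrm{G}_t^K(\Omega^{M_1},\Psi^{M_2},\alpha,\beta)\le\mathrm{G}_l^K(\Omega^{M_1},\Psi^{M_2},\alpha,\beta)}E(P^{M_1},Q^{M_2},\Omega^{M_1},\Psi^{M_2},\alpha,\beta)$. *)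

theory Defs
  imports "HOL-Probability.Probability"
begin

definition emp_type :: "nat \<Rightarrow> (nat \<Rightarrow> 'a) \<Rightarrow> 'a \<Rightarrow> real" where
  "emp_type n xs a = real (card {k. k < n \<and> xs k = a}) / real n"

definition KL :: "('a::finite \<Rightarrow> real) \<Rightarrow> ('a \<Rightarrow> real) \<Rightarrow> ereal" where
  "KL p q = (\<Sum>x\<in>UNIV. if p x = 0 then 0
                         else if q x = 0 then \<infinity>
                         else ereal (p x * ln (p x / q x)))"

definition mixR :: "real \<Rightarrow> real \<Rightarrow> ('a \<Rightarrow> real) \<Rightarrow> ('a \<Rightarrow> real) \<Rightarrow> 'a \<Rightarrow> real" where
  "mixR \<alpha> \<beta> p q = (\<lambda>x. (\<alpha> * p x + \<beta> * q x) / (\<alpha> + \<beta>))"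

definition GJS :: "('a::finite \<Rightarrow> real) \<Rightarrow> ('a \<Rightarrow> real) \<Rightarrow> real \<Rightarrow> real \<Rightarrow> ereal" where
  "GJS p q \<alpha> \<beta> = ereal \<alpha> * KL p (mixR \<alpha> \<beta> p q) + ereal \<beta> * KL q (mixR \<alpha> \<beta> p q)"

(* K-matches between [M1] and [M2] (0-based indices) *)
definition kmatches :: "nat \<Rightarrow> nat \<Rightarrow> nat \<Rightarrow> (nat \<times> nat) set set" where
  "kmatches M1 M2 K = {S. S \<subseteq> {..<M1} \<times> {..<M2} \<and> card S = K \<and> inj_on fst S \<and> inj_on snd S}"

definition Gsum :: "(nat \<times> nat) set \<Rightarrow> (nat \<Rightarrow> 'a::finite \<Rightarrow> real) \<Rightarrow> (nat \<Rightarrow> 'a \<Rightarrow> real)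
                    \<Rightarrow> real \<Rightarrow> real \<Rightarrow> ereal" where
  "Gsum S p q \<alpha> \<beta> = (\<Sum>(i,j)\<in>S. GJS (p i) (q j) \<alpha> \<beta>)"

definition Sstat :: "(nat \<times> nat) set \<Rightarrow> nat \<Rightarrow> nat \<Rightarrow> (nat \<Rightarrow> nat \<Rightarrow> 'a::finite)
                     \<Rightarrow> (nat \<Rightarrow> nat \<Rightarrow> 'a) \<Rightarrow> real \<Rightarrow> real \<Rightarrow> ereal" where
  "Sstat S n m xs ys \<alpha> \<beta> = Gsum S (\<lambda>i. emp_type n (xs i)) (\<lambda>j. emp_type m (ys j)) \<alpha> \<beta>"

definition in_hyp :: "nat \<Rightarrow> nat \<Rightarrow> (nat \<times> nat) set \<Rightarrow> (nat \<Rightarrow> 'a pmf) \<Rightarrow> (nat \<Rightarrow> 'a pmf) \<Rightarrow> bool" where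
  "in_hyp M1 M2 l P Q \<longleftrightarrow> (\<forall>i<M1. \<forall>j<M2. P i = Q j \<longleftrightarrow> (i, j) \<in> l)"

definition samples :: "nat \<Rightarrow> nat \<Rightarrow> (nat \<Rightarrow> nat \<Rightarrow> 'a) set" where
  "samples M n = PiE {..<M} (\<lambda>_. PiE {..<n} (\<lambda>_. UNIV))"

definition mismatch_prob :: "nat \<Rightarrow> nat \<Rightarrow> nat \<Rightarrow> nat \<Rightarrow> (nat \<Rightarrow> 'a::finite pmf) \<Rightarrow> (nat \<Rightarrow> 'a pmf)
      \<Rightarrow> (nat \<times> nat) set \<Rightarrow> ((nat \<Rightarrow> nat \<Rightarrow> 'a) \<Rightarrow> (nat \<Rightarrow> nat \<Rightarrow> 'a) \<Rightarrow> (nat \<times> nat) set) \<Rightarrow> real" where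
  "mismatch_prob M1 M2 n m P Q l dec =
     (\<Sum>xs\<in>samples M1 n. \<Sum>ys\<in>samples M2 m.
        if dec xs ys \<noteq> l
        then (\<Prod>i<M1. \<Prod>k<n. pmf (P i) (xs i k)) * (\<Prod>j<M2. \<Prod>k<m. pmf (Q j) (ys j k))
        else 0)"

definition xiN :: "real \<Rightarrow> nat \<Rightarrow> nat" where
  "xiN \<alpha> N = nat \<lceil>\<alpha> * real N\<rceil>"

(* dec is a fixed-length test: at every N it outputs a K-match minimizing S_t^K
   (any tie-breaking rule) *)
definition is_FL_test :: "nat \<Rightarrow> nat \<Rightarrow> nat \<Rightarrow> real \<Rightarrow> real
      \<Rightarrow> (nat \<Rightarrow> (nat \<Rightarrow> nat \<Rightarrow> 'a::finite) \<Rightarrow> (nat \<Rightarrow> nat \<Rightarrow> 'a) \<Rightarrow> (nat \<times> nat) set) \<Rightarrow> bool" where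
  "is_FL_test M1 M2 K \<alpha> \<beta> dec \<longleftrightarrow>
     (\<forall>N xs ys. xs \<in> samples M1 (xiN \<alpha> N) \<longrightarrow> ys \<in> samples M2 (xiN \<beta> N) \<longrightarrow>
        dec N xs ys \<in> kmatches M1 M2 K \<and>
        (\<forall>t\<in>kmatches M1 M2 K.
           Sstat (dec N xs ys) (xiN \<alpha> N) (xiN \<beta> N) xs ys \<alpha> \<beta>
             \<le> Sstat t (xiN \<alpha> N) (xiN \<beta> N) xs ys \<alpha> \<beta>))"

definition Eexp :: "nat \<Rightarrow> nat \<Rightarrow> real \<Rightarrow> real \<Rightarrow> (nat \<Rightarrow> 'a::finite pmf) \<Rightarrow> (nat \<Rightarrow> 'a pmf)
                    \<Rightarrow> (nat \<Rightarrow> 'a pmf) \<Rightarrow> (nat \<Rightarrow> 'a pmf) \<Rightarrow> ereal" where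
  "Eexp M1 M2 \<alpha> \<beta> P Q \<Omega> \<Psi> =
     (\<Sum>i<M1. ereal \<alpha> * KL (pmf (\<Omega> i)) (pmf (P i))) + (\<Sum>j<M2. ereal \<beta> * KL (pmf (\<Psi> j)) (pmf (Q j)))"

definition Ef :: "nat \<Rightarrow> nat \<Rightarrow> nat \<Rightarrow> real \<Rightarrow> real \<Rightarrow> (nat \<times> nat) set
                  \<Rightarrow> (nat \<Rightarrow> 'a::finite pmf) \<Rightarrow> (nat \<Rightarrow> 'a pmf) \<Rightarrow> ereal" where
  "Ef M1 M2 K \<alpha> \<beta> l P Q =
     (INF t \<in> kmatches M1 M2 K - {l}.
        INF \<Omega>\<Psi> \<in> {(\<Omega>, \<Psi>). Gsum t (\<lambda>i. pmf (\<Omega> i)) (\<lambda>j. pmf (\<Psi> j)) \<alpha> \<beta>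
                            \<le> Gsum l (\<lambda>i. pmf (\<Omega> i)) (\<lambda>j. pmf (\<Psi> j)) \<alpha> \<beta>}.
          Eexp M1 M2 \<alpha> \<beta> P Q (fst \<Omega>\<Psi>) (snd \<Omega>\<Psi>))"

definition exponent_at :: "real \<Rightarrow> nat \<Rightarrow> ereal" where
  "exponent_at b N = (if b = 0 then \<infinity> else ereal (- ln b / real N))"

end

theory Submission
  imports Defs "HOL-Real_Asymp.Real_Asymp"
begin

text \<open>Method of types: a sample sequence of length \<open>n\<close> with type \<open>T\<close> has probability
  \<open>exp (- n D(T\<parallel>p))\<close> times its probability under \<open>T\<close> itself, and these latter probabilities
  sum to at most the number of types, which is polynomial in \<open>n\<close>. If the test errs, the types
  of the observed databases form a pair \<open>(\<Omega>, \<Psi>)\<close> admissible in the definition of \<open>E\<^sub>f\<close>, so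
  the likelihood of every erroneous sample is at most \<open>exp (- N E\<^sub>f)\<close> times its type
  likelihood. Summing, the mismatch probability is at most \<open>exp (- N E\<^sub>f)\<close> times a polynomial
  in \<open>N\<close>.\<close>

lemma sum_card_fibres:
  fixes x :: "nat \<Rightarrow> 'a::finite"
  shows "(\<Sum>a\<in>UNIV. card {k. k < n \<and> x k = a}) = n"
proof -
  have "(\<Sum>a\<in>UNIV. \<Sum>k\<in>{k\<in>{..<n}. x k = a}. (1::nat)) = (\<Sum>k\<in>{..<n}. 1)"
    by (rule sum.group) auto
  then show ?thesis by simp
qed

lemma prod_eq_prod_power_card_fibres:
  fixes f :: "'a::finite \<Rightarrow> real" and x :: "nat \<Rightarrow> 'a"
  shows "(\<Prod>k<n. f (x k)) = (\<Prod>a\<in>UNIV. f a ^ card {k. k < n \<and> x k = a})"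
proof -
  have "(\<Prod>k\<in>{k\<in>{..<n}. x k = a}. f (x k)) = f a ^ card {k. k < n \<and> x k = a}" for a
    by (simp add: prod.cong[of _ _ _ "\<lambda>_. f a"])
  moreover have "(\<Prod>a\<in>UNIV. \<Prod>k\<in>{k\<in>{..<n}. x k = a}. f (x k)) = (\<Prod>k\<in>{..<n}. f (x k))"
    by (rule prod.group) auto
  ultimately show ?thesis by simp
qed

lemma emp_type_nonneg: "0 \<le> emp_type n x a"
  unfolding emp_type_def by simp

lemma sum_emp_type:
  fixes x :: "nat \<Rightarrow> 'a::finite"
  assumes "n > 0"
  shows "(\<Sum>a\<in>UNIV. emp_type n x a) = 1"
proof -
  have "(\<Sum>a\<in>UNIV. emp_type n x a) = real (\<Sum>a\<in>UNIV. card {k. k < n \<and> x k = a}) / real n"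
    unfolding emp_type_def of_nat_sum by (simp add: sum_divide_distrib)
  then show ?thesis using assms by (simp add: sum_card_fibres)
qed

lemma pmf_embed_emp_type:
  fixes x :: "nat \<Rightarrow> 'a::finite"
  assumes "n > 0"
  shows "pmf (embed_pmf (emp_type n x)) = emp_type n x"
proof
  fix a
  have "(\<integral>\<^sup>+y. ennreal (emp_type n x y) \<partial>count_space UNIV) = ennreal (\<Sum>y\<in>UNIV. emp_type n x y)"
    by (simp add: nn_integral_count_space_finite emp_type_nonneg)
  then show "pmf (embed_pmf (emp_type n x)) a = emp_type n x a"
    by (intro pmf_embed_pmf) (simp_all add: emp_type_nonneg sum_emp_type[OF assms])
qed

lemma card_emp_type_image_le:
  fixes S :: "(nat \<Rightarrow> 'a::finite) set"
  shows "card (emp_type n ` S) \<le> (n + 1) ^ CARD('a)"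
proof -
  define V where "V = (\<lambda>j. real j / real n) ` {..n}"
  have "emp_type n ` S \<subseteq> PiE UNIV (\<lambda>_. V)"
  proof
    fix t assume "t \<in> emp_type n ` S"
    then obtain y where t: "t = emp_type n y" by auto
    have "card {k. k < n \<and> y k = a} \<le> n" for a
      using card_mono[of "{..<n}" "{k. k < n \<and> y k = a}"] by auto
    then show "t \<in> PiE UNIV (\<lambda>_. V)" unfolding t emp_type_def V_def by auto
  qed
  then have "card (emp_type n ` S) \<le> card (PiE (UNIV::'a set) (\<lambda>_. V))"
    by (intro card_mono) (auto simp: V_def intro!: finite_PiE)
  also have "\<dots> = card V ^ CARD('a)" by (simp add: card_PiE)
  also have "\<dots> \<le> (n + 1) ^ CARD('a)"
    using card_image_le[of "{..n}" "\<lambda>j. real j / real n"] by (simp add: V_def power_mono)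
  finally show ?thesis .
qed

text \<open>Grouping sequences by their type, each group contributes at most one, being part of
  the total mass of \<open>T\<^sup>n\<close>.\<close>

lemma sum_type_likelihood_le:
  assumes "n > 0"
  shows "(\<Sum>x\<in>PiE {..<n} (\<lambda>_. UNIV::'a::finite set). \<Prod>k<n. emp_type n x (x k))
           \<le> real (n + 1) ^ CARD('a)"
proof -
  define S where "S = PiE {..<n} (\<lambda>_. UNIV::'a set)"
  have fin: "finite S" unfolding S_def by (intro finite_PiE) auto
  have "(\<Sum>x\<in>S. \<Prod>k<n. emp_type n x (x k))
      = (\<Sum>t\<in>emp_type n ` S. \<Sum>x\<in>{x\<in>S. emp_type n x = t}. \<Prod>k<n. emp_type n x (x k))"
    by (rule sum.group[symmetric]) (use fin in auto)
  also have "\<dots> = (\<Sum>t\<in>emp_type n ` S. \<Sum>x\<in>{x\<in>S. emp_type n x = t}. \<Prod>k<n. t (x k))"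
    by (intro sum.cong) auto
  also have "\<dots> \<le> (\<Sum>t\<in>emp_type n ` S. 1)"
  proof (rule sum_mono)
    fix t assume "t \<in> emp_type n ` S"
    then obtain y where t: "t = emp_type n y" by auto
    have "(\<Sum>x\<in>{x\<in>S. emp_type n x = t}. \<Prod>k<n. t (x k)) \<le> (\<Sum>x\<in>S. \<Prod>k<n. t (x k))"
      by (rule sum_mono2) (use fin in \<open>auto simp: t emp_type_nonneg intro: prod_nonneg\<close>)
    also have "\<dots> = (\<Prod>k<n. \<Sum>a\<in>UNIV. t a)"
      unfolding S_def by (rule prod_sum_PiE[symmetric]) auto
    also have "\<dots> = 1" unfolding t by (simp add: sum_emp_type[OF assms])
    finally show "(\<Sum>x\<in>{x\<in>S. emp_type n x = t}. \<Prod>k<n. t (x k)) \<le> 1" .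
  qed
  also have "\<dots> = real (card (emp_type n ` S))" by simp
  also have "\<dots> \<le> real (n + 1) ^ CARD('a)"
    by (metis card_emp_type_image_le of_nat_le_iff of_nat_power)
  finally show ?thesis unfolding S_def .
qed

definition KL_real :: "('a::finite \<Rightarrow> real) \<Rightarrow> ('a \<Rightarrow> real) \<Rightarrow> real" where
  "KL_real p q = (\<Sum>x\<in>UNIV. if p x = 0 then 0 else p x * ln (p x / q x))"

lemma KL_eq_ereal_KL_real:
  fixes p q :: "'a::finite \<Rightarrow> real"
  assumes "\<And>x. p x \<noteq> 0 \<Longrightarrow> q x \<noteq> 0"
  shows "KL p q = ereal (KL_real p q)"
  unfolding KL_def KL_real_def sum_ereal[symmetric] using assms by (intro sum.cong) auto

lemma KL_eq_infinity:
  fixes p q :: "'a::finite \<Rightarrow> real"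
  assumes "p x \<noteq> 0" "q x = 0"
  shows "KL p q = \<infinity>"
  unfolding KL_def sum_Pinfty using assms by (intro conjI bexI[of _ x]) auto

lemma KL_real_nonneg:
  fixes p q :: "'a::finite \<Rightarrow> real"
  assumes "\<And>a. 0 \<le> p a" "sum p UNIV = 1" "\<And>a. 0 \<le> q a" "sum q UNIV = 1"
    and "\<And>a. p a \<noteq> 0 \<Longrightarrow> q a \<noteq> 0"
  shows "0 \<le> KL_real p q"
proof -
  have "p a - q a \<le> (if p a = 0 then 0 else p a * ln (p a / q a))" for a
  proof (cases "p a = 0")
    case False
    then have p: "p a > 0" and q: "q a > 0" using assms(1,3,5)[of a] by (auto simp: order_le_less)
    have "p a * ln (q a / p a) \<le> p a * (q a / p a - 1)"
      using p q by (intro mult_left_mono ln_le_minus_one) auto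
    also have "\<dots> = q a - p a" using p by (simp add: field_simps)
    finally have "p a * ln (q a / p a) \<le> q a - p a" .
    moreover have "ln (p a / q a) = - ln (q a / p a)" using p q by (simp add: ln_div)
    ultimately show ?thesis using False by simp
  qed (use assms(3) in simp)
  then have "(\<Sum>a\<in>UNIV. p a - q a) \<le> KL_real p q"
    unfolding KL_real_def by (intro sum_mono)
  then show ?thesis using assms(2,4) by (simp add: sum_subtractf)
qed

lemma KL_nonneg:
  fixes p q :: "'a::finite \<Rightarrow> real"
  assumes "\<And>a. 0 \<le> p a" "sum p UNIV = 1" "\<And>a. 0 \<le> q a" "sum q UNIV = 1"
  shows "0 \<le> KL p q"
proof (cases "\<exists>x. p x \<noteq> 0 \<and> q x = 0")
  case True
  then obtain x where "p x \<noteq> 0" "q x = 0" by blast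
  then show ?thesis by (simp add: KL_eq_infinity)
next
  case False
  then have "\<And>x. p x \<noteq> 0 \<Longrightarrow> q x \<noteq> 0" by blast
  then show ?thesis using KL_real_nonneg[OF assms] by (simp add: KL_eq_ereal_KL_real)
qed

lemma power_eq_type_power_mult_exp:
  assumes "n > 0" "c > 0" "p > 0"
  defines "t \<equiv> real c / real n"
  shows "p ^ c = t ^ c * exp (- real n * (t * ln (t / p)))"
proof -
  have t: "t > 0" and nt: "real n * t = real c" using assms by auto
  have "- real n * (t * ln (t / p)) = real c * ln (p / t)"
    using t assms(3) by (simp add: ln_div algebra_simps flip: nt)
  then have "exp (- real n * (t * ln (t / p))) = exp (real c * ln (p / t))"
    by simp
  also have "\<dots> = (p / t) ^ c" using t assms(3) by (simp add: exp_of_nat_mult)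
  finally show ?thesis using t by (simp add: power_divide)
qed

lemma prod_eq_type_likelihood_mult_exp:
  fixes x :: "nat \<Rightarrow> 'a::finite" and p :: "'a \<Rightarrow> real"
  assumes n: "n > 0" and pos: "\<And>a. emp_type n x a \<noteq> 0 \<Longrightarrow> p a > 0"
  shows "(\<Prod>k<n. p (x k)) = (\<Prod>k<n. emp_type n x (x k)) * exp (- real n * KL_real (emp_type n x) p)"
proof -
  define T where "T = emp_type n x"
  define c where "c a = card {k. k < n \<and> x k = a}" for a
  have T: "T a = real (c a) / real n" for a unfolding T_def c_def emp_type_def by simp
  have letter: "p a ^ c a = T a ^ c a * exp (- real n * (if T a = 0 then 0 else T a * ln (T a / p a)))"
    for a
  proof (cases "c a = 0")
    case False
    then have "T a \<noteq> 0" using T n by simp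
    then have "p a > 0" using pos unfolding T_def by blast
    then have "p a ^ c a = (real (c a) / real n) ^ c a
        * exp (- real n * (real (c a) / real n * ln (real (c a) / real n / p a)))"
      using False n by (intro power_eq_type_power_mult_exp) auto
    then show ?thesis unfolding T if_not_P[OF \<open>T a \<noteq> 0\<close>[unfolded T]] .
  qed (simp add: T)
  have "(\<Prod>k<n. p (x k)) = (\<Prod>a\<in>UNIV. p a ^ c a)"
    unfolding c_def by (rule prod_eq_prod_power_card_fibres)
  also have "\<dots> = (\<Prod>a\<in>UNIV. T a ^ c a) * exp (- real n * KL_real T p)"
    by (simp add: letter prod.distrib KL_real_def sum_distrib_left exp_sum)
  also have "(\<Prod>a\<in>UNIV. T a ^ c a) = (\<Prod>k<n. T (x k))"
    unfolding c_def by (rule prod_eq_prod_power_card_fibres[symmetric])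
  finally show ?thesis unfolding T_def .
qed

lemma prod_eq_0_if_outside_support:
  fixes x :: "nat \<Rightarrow> 'a::finite" and p :: "'a \<Rightarrow> real"
  assumes "emp_type n x a \<noteq> 0" "p a = 0"
  shows "(\<Prod>k<n. p (x k)) = 0"
proof -
  have "{k. k < n \<and> x k = a} \<noteq> {}" using assms(1) unfolding emp_type_def by auto
  then obtain k where "k < n" "x k = a" by blast
  then show ?thesis using assms(2) by (intro prod_zero) auto
qed

text \<open>The extended-real form of \<open>w \<le> exp (- D) * v\<close>; for \<open>D = \<infinity>\<close> it forces \<open>w \<le> 0\<close>.\<close>

definition exp_neg_bound :: "ereal \<Rightarrow> real \<Rightarrow> real \<Rightarrow> bool" where
  "exp_neg_bound D w v \<longleftrightarrow> (\<forall>e. ereal e \<le> D \<longrightarrow> w \<le> exp (- e) * v)"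

lemma exp_neg_bound_mono: "exp_neg_bound D w v \<Longrightarrow> D' \<le> D \<Longrightarrow> exp_neg_bound D' w v"
  unfolding exp_neg_bound_def by (meson order_trans)

lemma exp_neg_bound_mult:
  assumes bound1: "exp_neg_bound D1 w1 v1" and bound2: "exp_neg_bound D2 w2 v2"
    and "0 \<le> D1" "0 \<le> D2" "0 \<le> w1" "0 \<le> w2"
  shows "exp_neg_bound (D1 + D2) (w1 * w2) (v1 * v2)"
  unfolding exp_neg_bound_def
proof (intro allI impI)
  fix e assume e: "ereal e \<le> D1 + D2"
  obtain e1 e2 where split: "e = e1 + e2" "ereal e1 \<le> D1" "ereal e2 \<le> D2"
  proof (cases D1)
    case (real d1)
    with e have "ereal (e - d1) \<le> D2" by (cases D2) auto
    with real show ?thesis using that[of d1 "e - d1"] by simp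
  next
    case PInf
    then show ?thesis using that[of e 0] \<open>0 \<le> D2\<close> by (simp add: zero_ereal_def)
  qed (use \<open>0 \<le> D1\<close> in simp)
  then have "w1 \<le> exp (- e1) * v1" "w2 \<le> exp (- e2) * v2"
    using bound1 bound2 unfolding exp_neg_bound_def by blast+
  then have "w1 * w2 \<le> (exp (- e1) * v1) * (exp (- e2) * v2)"
    using assms(5,6) by (intro mult_mono) auto
  also have "\<dots> = exp (- e) * (v1 * v2)"
    by (simp add: split(1) exp_diff exp_minus field_simps)
  finally show "w1 * w2 \<le> exp (- e) * (v1 * v2)" .
qed

lemma exp_neg_bound_prod:
  assumes "finite I" and "\<And>i. i \<in> I \<Longrightarrow> exp_neg_bound (D i) (w i) (v i)"
    and "\<And>i. i \<in> I \<Longrightarrow> 0 \<le> D i" and "\<And>i. i \<in> I \<Longrightarrow> 0 \<le> w i"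
  shows "exp_neg_bound (\<Sum>i\<in>I. D i) (\<Prod>i\<in>I. w i) (\<Prod>i\<in>I. v i)"
  using assms
proof (induction I rule: finite_induct)
  case empty
  then show ?case unfolding exp_neg_bound_def by (simp add: zero_ereal_def)
next
  case (insert i I)
  then show ?case by (simp add: exp_neg_bound_mult sum_nonneg prod_nonneg)
qed

lemma exp_neg_bound_likelihood:
  fixes x :: "nat \<Rightarrow> 'a::finite"
  assumes n: "n > 0" and p: "\<And>a. 0 \<le> p a"
  shows "exp_neg_bound (ereal n * KL (emp_type n x) p) (\<Prod>k<n. p (x k)) (\<Prod>k<n. emp_type n x (x k))"
proof (cases "\<exists>a. emp_type n x a \<noteq> 0 \<and> p a = 0")
  case True
  then have zero: "(\<Prod>k<n. p (x k)) = 0" using prod_eq_0_if_outside_support by blast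
  have "0 \<le> exp (- e) * (\<Prod>k<n. emp_type n x (x k))" for e
    by (simp add: prod_nonneg emp_type_nonneg)
  then show ?thesis unfolding exp_neg_bound_def zero by blast
next
  case False
  then have pos: "emp_type n x a \<noteq> 0 \<Longrightarrow> p a > 0" for a using p[of a] by force
  show ?thesis unfolding exp_neg_bound_def
  proof (intro allI impI)
    fix e assume "ereal e \<le> ereal n * KL (emp_type n x) p"
    moreover have "KL (emp_type n x) p = ereal (KL_real (emp_type n x) p)"
      using pos by (intro KL_eq_ereal_KL_real) force
    ultimately have "exp (- real n * KL_real (emp_type n x) p) \<le> exp (- e)" by simp
    moreover have "(\<Prod>k<n. p (x k))
        = exp (- real n * KL_real (emp_type n x) p) * (\<Prod>k<n. emp_type n x (x k))"
      using prod_eq_type_likelihood_mult_exp[OF n pos] by (simp only: mult.commute)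
    ultimately show "(\<Prod>k<n. p (x k)) \<le> exp (- e) * (\<Prod>k<n. emp_type n x (x k))"
      by (simp add: mult_right_mono prod_nonneg emp_type_nonneg)
  qed
qed

definition db_likelihood :: "nat \<Rightarrow> nat \<Rightarrow> (nat \<Rightarrow> 'a pmf) \<Rightarrow> (nat \<Rightarrow> nat \<Rightarrow> 'a) \<Rightarrow> real" where
  "db_likelihood M n P xs = (\<Prod>i<M. \<Prod>k<n. pmf (P i) (xs i k))"

definition db_type_likelihood :: "nat \<Rightarrow> nat \<Rightarrow> (nat \<Rightarrow> nat \<Rightarrow> 'a) \<Rightarrow> real" where
  "db_type_likelihood M n xs = (\<Prod>i<M. \<Prod>k<n. emp_type n (xs i) (xs i k))"

lemma db_likelihood_nonneg: "0 \<le> db_likelihood M n P xs"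
  unfolding db_likelihood_def by (simp add: prod_nonneg)

lemma db_type_likelihood_nonneg: "0 \<le> db_type_likelihood M n xs"
  unfolding db_type_likelihood_def by (simp add: prod_nonneg emp_type_nonneg)

lemma KL_emp_type_nonneg:
  fixes x :: "nat \<Rightarrow> 'a::finite"
  assumes "n > 0"
  shows "0 \<le> KL (emp_type n x) (pmf P)"
  by (intro KL_nonneg) (simp_all add: emp_type_nonneg sum_emp_type[OF assms] sum_pmf_eq_1)

lemma exp_neg_bound_db_likelihood:
  fixes xs :: "nat \<Rightarrow> nat \<Rightarrow> 'a::finite" and P :: "nat \<Rightarrow> 'a pmf"
  assumes n: "n > 0" and c: "0 \<le> c" "c \<le> real n"
  shows "exp_neg_bound (\<Sum>i<M. ereal c * KL (emp_type n (xs i)) (pmf (P i)))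
           (db_likelihood M n P xs) (db_type_likelihood M n xs)"
  unfolding db_likelihood_def db_type_likelihood_def
proof (rule exp_neg_bound_prod)
  fix i
  have KL: "0 \<le> KL (emp_type n (xs i)) (pmf (P i))" by (rule KL_emp_type_nonneg[OF n])
  then show "0 \<le> ereal c * KL (emp_type n (xs i)) (pmf (P i))" using c by simp
  show "exp_neg_bound (ereal c * KL (emp_type n (xs i)) (pmf (P i)))
          (\<Prod>k<n. pmf (P i) (xs i k)) (\<Prod>k<n. emp_type n (xs i) (xs i k))"
    using KL c by (intro exp_neg_bound_mono[OF exp_neg_bound_likelihood[OF n]] ereal_mult_right_mono)
      simp_all
qed (simp_all add: prod_nonneg)

lemma samples_sum_db_type_likelihood_le:
  assumes "n > 0"
  shows "(\<Sum>xs\<in>samples M n. db_type_likelihood M n (xs :: nat \<Rightarrow> nat \<Rightarrow> 'a::finite))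
           \<le> real (n + 1) ^ (CARD('a) * M)"
proof -
  have "(\<Sum>xs\<in>samples M n. db_type_likelihood M n (xs :: nat \<Rightarrow> nat \<Rightarrow> 'a))
      = (\<Prod>i<M. \<Sum>x\<in>PiE {..<n} (\<lambda>_. UNIV::'a set). \<Prod>k<n. emp_type n x (x k))"
    unfolding samples_def db_type_likelihood_def
    by (rule prod_sum_PiE[symmetric]) (auto intro!: finite_PiE)
  also have "\<dots> \<le> (\<Prod>i<M. real (n + 1) ^ CARD('a))"
    by (intro prod_mono conjI sum_type_likelihood_le[OF assms] sum_nonneg prod_nonneg)
      (simp_all add: emp_type_nonneg)
  also have "\<dots> = real (n + 1) ^ (CARD('a) * M)" by (simp add: power_mult)
  finally show ?thesis .
qed

lemma Ef_le_type_exponent: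
  fixes P Q :: "nat \<Rightarrow> 'a::finite pmf" and xs ys :: "nat \<Rightarrow> nat \<Rightarrow> 'a"
    and dec :: "nat \<Rightarrow> (nat \<Rightarrow> nat \<Rightarrow> 'a) \<Rightarrow> (nat \<Rightarrow> nat \<Rightarrow> 'a) \<Rightarrow> (nat \<times> nat) set"
  assumes l: "l \<in> kmatches M1 M2 K" and test: "is_FL_test M1 M2 K \<alpha> \<beta> dec"
    and xs: "xs \<in> samples M1 (xiN \<alpha> N)" and ys: "ys \<in> samples M2 (xiN \<beta> N)"
    and err: "dec N xs ys \<noteq> l" and n: "xiN \<alpha> N > 0" and m: "xiN \<beta> N > 0"
  shows "Ef M1 M2 K \<alpha> \<beta> l P Q \<le>
      (\<Sum>i<M1. ereal \<alpha> * KL (emp_type (xiN \<alpha> N) (xs i)) (pmf (P i)))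
    + (\<Sum>j<M2. ereal \<beta> * KL (emp_type (xiN \<beta> N) (ys j)) (pmf (Q j)))"
proof -
  define t where "t = dec N xs ys"
  define \<Omega> where "\<Omega> i = embed_pmf (emp_type (xiN \<alpha> N) (xs i))" for i
  define \<Psi> where "\<Psi> j = embed_pmf (emp_type (xiN \<beta> N) (ys j))" for j
  have \<Omega>: "(\<lambda>i. pmf (\<Omega> i)) = (\<lambda>i. emp_type (xiN \<alpha> N) (xs i))"
    unfolding \<Omega>_def by (simp add: pmf_embed_emp_type[OF n])
  have \<Psi>: "(\<lambda>j. pmf (\<Psi> j)) = (\<lambda>j. emp_type (xiN \<beta> N) (ys j))"
    unfolding \<Psi>_def by (simp add: pmf_embed_emp_type[OF m])
  have t: "t \<in> kmatches M1 M2 K - {l}"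
    and min: "\<forall>u\<in>kmatches M1 M2 K.
      Sstat t (xiN \<alpha> N) (xiN \<beta> N) xs ys \<alpha> \<beta> \<le> Sstat u (xiN \<alpha> N) (xiN \<beta> N) xs ys \<alpha> \<beta>"
    using test xs ys err unfolding is_FL_test_def t_def by blast+
  have "(\<Omega>, \<Psi>) \<in> {(\<Omega>, \<Psi>). Gsum t (\<lambda>i. pmf (\<Omega> i)) (\<lambda>j. pmf (\<Psi> j)) \<alpha> \<beta>
                          \<le> Gsum l (\<lambda>i. pmf (\<Omega> i)) (\<lambda>j. pmf (\<Psi> j)) \<alpha> \<beta>}"
    using min l by (simp add: \<Omega> \<Psi> Sstat_def)
  then have "Ef M1 M2 K \<alpha> \<beta> l P Q \<le> Eexp M1 M2 \<alpha> \<beta> P Q \<Omega> \<Psi>"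
    unfolding Ef_def by (intro INF_lower2[OF t] INF_lower2) auto
  then show ?thesis
    by (simp add: Eexp_def \<Omega>_def \<Psi>_def pmf_embed_emp_type[OF n] pmf_embed_emp_type[OF m])
qed

lemma xiN_bounds:
  assumes "\<alpha> > 0"
  shows "\<alpha> * real N \<le> real (xiN \<alpha> N)" and "real (xiN \<alpha> N + 1) \<le> \<alpha> * real N + 2"
  using assms unfolding xiN_def by simp_all linarith+

lemma xiN_pos: "\<alpha> > 0 \<Longrightarrow> N > 0 \<Longrightarrow> xiN \<alpha> N > 0"
  unfolding xiN_def by simp

lemma mismatched_sample_likelihood_le:
  fixes P Q :: "nat \<Rightarrow> 'a::finite pmf" and xs ys :: "nat \<Rightarrow> nat \<Rightarrow> 'a"
    and dec :: "nat \<Rightarrow> (nat \<Rightarrow> nat \<Rightarrow> 'a) \<Rightarrow> (nat \<Rightarrow> nat \<Rightarrow> 'a) \<Rightarrow> (nat \<times> nat) set"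
  assumes l: "l \<in> kmatches M1 M2 K" and test: "is_FL_test M1 M2 K \<alpha> \<beta> dec"
    and \<alpha>: "\<alpha> > 0" and \<beta>: "\<beta> > 0" and N: "N > 0"
    and e: "ereal e \<le> Ef M1 M2 K \<alpha> \<beta> l P Q"
    and xs: "xs \<in> samples M1 (xiN \<alpha> N)" and ys: "ys \<in> samples M2 (xiN \<beta> N)"
    and err: "dec N xs ys \<noteq> l"
  defines "n \<equiv> xiN \<alpha> N" and "m \<equiv> xiN \<beta> N"
  shows "db_likelihood M1 n P xs * db_likelihood M2 m Q ys
           \<le> exp (- real N * e) * (db_type_likelihood M1 n xs * db_type_likelihood M2 m ys)"
proof -
  have n: "n > 0" and m: "m > 0" unfolding n_def m_def using \<alpha> \<beta> N by (simp_all add: xiN_pos)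
  define DX where "DX = (\<Sum>i<M1. ereal \<alpha> * KL (emp_type n (xs i)) (pmf (P i)))"
  define DY where "DY = (\<Sum>j<M2. ereal \<beta> * KL (emp_type m (ys j)) (pmf (Q j)))"
  have KLX: "0 \<le> KL (emp_type n (xs i)) (pmf (P i))" for i by (rule KL_emp_type_nonneg[OF n])
  have KLY: "0 \<le> KL (emp_type m (ys j)) (pmf (Q j))" for j by (rule KL_emp_type_nonneg[OF m])
  have "ereal e \<le> DX + DY"
    using e Ef_le_type_exponent[OF l test xs ys err] n m
    unfolding DX_def DY_def n_def m_def by (meson order_trans)
  then have "ereal (real N) * ereal e \<le> ereal (real N) * (DX + DY)"
    by (rule ereal_mult_left_mono) simp
  then have "ereal (real N * e) \<le> ereal (real N) * (DX + DY)" by simp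
  also have "\<dots> = (\<Sum>i<M1. ereal (\<alpha> * real N) * KL (emp_type n (xs i)) (pmf (P i)))
      + (\<Sum>j<M2. ereal (\<beta> * real N) * KL (emp_type m (ys j)) (pmf (Q j)))"
    using \<alpha> \<beta> KLX KLY unfolding DX_def DY_def
    by (simp add: ereal_right_distrib sum_nonneg sum_ereal_right_distrib mult.assoc[symmetric]
        mult.commute)
  finally have "ereal (real N * e) \<le> \<dots>" .
  moreover have "exp_neg_bound \<dots>
      (db_likelihood M1 n P xs * db_likelihood M2 m Q ys)
      (db_type_likelihood M1 n xs * db_type_likelihood M2 m ys)"
    using \<alpha> \<beta> KLX KLY xiN_bounds(1)[OF \<alpha>, of N, folded n_def]
      xiN_bounds(1)[OF \<beta>, of N, folded m_def]
    by (intro exp_neg_bound_mult exp_neg_bound_db_likelihood n m sum_nonneg db_likelihood_nonneg)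
      simp_all
  ultimately show ?thesis unfolding exp_neg_bound_def by simp
qed

lemma mismatch_prob_le:
  fixes P Q :: "nat \<Rightarrow> 'a::finite pmf"
    and dec :: "nat \<Rightarrow> (nat \<Rightarrow> nat \<Rightarrow> 'a) \<Rightarrow> (nat \<Rightarrow> nat \<Rightarrow> 'a) \<Rightarrow> (nat \<times> nat) set"
  assumes l: "l \<in> kmatches M1 M2 K" and test: "is_FL_test M1 M2 K \<alpha> \<beta> dec"
    and \<alpha>: "\<alpha> > 0" and \<beta>: "\<beta> > 0" and N: "N > 0"
    and e: "ereal e \<le> Ef M1 M2 K \<alpha> \<beta> l P Q"
  shows "mismatch_prob M1 M2 (xiN \<alpha> N) (xiN \<beta> N) P Q l (dec N)
           \<le> exp (- real N * e) *
              ((\<alpha> * real N + 2) ^ (CARD('a) * M1) * (\<beta> * real N + 2) ^ (CARD('a) * M2))"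
proof -
  define n where "n = xiN \<alpha> N"
  define m where "m = xiN \<beta> N"
  have n: "n > 0" and m: "m > 0" unfolding n_def m_def using \<alpha> \<beta> N by (simp_all add: xiN_pos)
  have sample: "(if dec N xs ys \<noteq> l then db_likelihood M1 n P xs * db_likelihood M2 m Q ys else 0)
      \<le> exp (- real N * e) * (db_type_likelihood M1 n xs * db_type_likelihood M2 m ys)"
    if "xs \<in> samples M1 n" and "ys \<in> samples M2 m" for xs ys :: "nat \<Rightarrow> nat \<Rightarrow> 'a"
    using mismatched_sample_likelihood_le[OF l test \<alpha> \<beta> N e, of xs ys] that
    by (simp add: n_def m_def db_type_likelihood_nonneg)
  have "mismatch_prob M1 M2 n m P Q l (dec N)
      = (\<Sum>xs\<in>samples M1 n. \<Sum>ys\<in>samples M2 m.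
           if dec N xs ys \<noteq> l then db_likelihood M1 n P xs * db_likelihood M2 m Q ys else 0)"
    unfolding mismatch_prob_def db_likelihood_def ..
  also have "\<dots> \<le> (\<Sum>xs\<in>samples M1 n. \<Sum>ys\<in>samples M2 m.
      exp (- real N * e) * (db_type_likelihood M1 n (xs :: nat \<Rightarrow> nat \<Rightarrow> 'a)
        * db_type_likelihood M2 m (ys :: nat \<Rightarrow> nat \<Rightarrow> 'a)))"
    by (intro sum_mono sample)
  also have "\<dots> = exp (- real N * e) *
      ((\<Sum>xs\<in>samples M1 n. db_type_likelihood M1 n (xs :: nat \<Rightarrow> nat \<Rightarrow> 'a))
        * (\<Sum>ys\<in>samples M2 m. db_type_likelihood M2 m (ys :: nat \<Rightarrow> nat \<Rightarrow> 'a)))"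
    unfolding sum_product by (simp only: sum_distrib_left)
  also have "\<dots> \<le> exp (- real N * e) * (real (n + 1) ^ (CARD('a) * M1) * real (m + 1) ^ (CARD('a) * M2))"
    by (intro mult_left_mono mult_mono samples_sum_db_type_likelihood_le n m sum_nonneg
        db_type_likelihood_nonneg) simp_all
  also have "\<dots> \<le> exp (- real N * e) *
      ((\<alpha> * real N + 2) ^ (CARD('a) * M1) * (\<beta> * real N + 2) ^ (CARD('a) * M2))"
    using xiN_bounds(2)[OF \<alpha>, of N] xiN_bounds(2)[OF \<beta>, of N] unfolding n_def m_def
    by (intro mult_left_mono mult_mono power_mono) simp_all
  finally show ?thesis unfolding n_def m_def .
qed

lemma mismatch_prob_nonneg: "0 \<le> mismatch_prob M1 M2 n m P Q l dec"
  unfolding mismatch_prob_def by (intro sum_nonneg) (auto intro!: mult_nonneg_nonneg prod_nonneg)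

lemma exponent_at_ge:
  assumes "0 \<le> b" and bound: "b \<le> exp (- real N * e) * C" and N: "N > 0"
  shows "ereal (e - ln C / real N) \<le> exponent_at b N"
proof (cases "b = 0")
  case False
  then have b: "b > 0" using assms(1) by simp
  then have "0 < exp (- real N * e) * C" using bound by linarith
  then have C: "C > 0" by (simp add: zero_less_mult_iff)
  have "ln b \<le> ln (exp (- real N * e) * C)" using b bound by simp
  then have ln_b: "ln b \<le> - real N * e + ln C" using C by (simp add: ln_mult)
  have "e - ln C / real N = (real N * e - ln C) / real N" using N by (simp add: field_simps)
  also have "\<dots> \<le> - ln b / real N" using ln_b by (intro divide_right_mono) auto
  finally show ?thesis using False unfolding exponent_at_def by simp
qed (simp add: exponent_at_def)

lemma tendsto_ln_powers_div:
  assumes "a > 0" "b > 0"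
  shows "((\<lambda>N::nat. ln ((a * real N + 2) ^ k1 * (b * real N + 2) ^ k2) / real N) \<longlongrightarrow> 0) sequentially"
proof -
  have pos: "0 < c * real N + 2" if "c > 0" for c N
    using that by (intro add_nonneg_pos) auto
  have eq: "ln ((a * real N + 2) ^ k1 * (b * real N + 2) ^ k2) / real N
      = real k1 * (ln (a * real N + 2) / real N) + real k2 * (ln (b * real N + 2) / real N)" for N
    using pos[OF assms(1), of N] pos[OF assms(2), of N]
    by (simp add: ln_mult ln_realpow add_divide_distrib)
  have lim: "((\<lambda>N::nat. ln (c * real N + 2) / real N) \<longlongrightarrow> 0) sequentially" if "c > 0" for c
    using that by real_asymp
  show ?thesis unfolding eq
    using tendsto_add[OF tendsto_mult_right_zero[OF lim[OF assms(1)]]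
        tendsto_mult_right_zero[OF lim[OF assms(2)]]] by simp
qed

lemma ereal_le_liminf_of_eventually:
  fixes f :: "nat \<Rightarrow> ereal"
  assumes "(g \<longlongrightarrow> 0) sequentially" and "\<forall>\<^sub>F N in sequentially. ereal (e - g N) \<le> f N"
  shows "ereal e \<le> liminf f"
proof -
  have "((\<lambda>N. ereal (e - g N)) \<longlongrightarrow> ereal (e - 0)) sequentially"
    by (intro tendsto_ereal tendsto_diff tendsto_const assms(1))
  then have "liminf (\<lambda>N. ereal (e - g N)) = ereal e" by (simp add: lim_imp_Liminf)
  moreover have "liminf (\<lambda>N. ereal (e - g N)) \<le> liminf f" using assms(2) by (rule Liminf_mono)
  ultimately show ?thesis by simp
qed

theorem theorem2:
  fixes P Q :: "nat \<Rightarrow> 'a::finite pmf"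
    and M1 M2 K :: nat and \<alpha> \<beta> :: real
    and dec :: "nat \<Rightarrow> (nat \<Rightarrow> nat \<Rightarrow> 'a) \<Rightarrow> (nat \<Rightarrow> nat \<Rightarrow> 'a) \<Rightarrow> (nat \<times> nat) set"
    and l :: "(nat \<times> nat) set"
  assumes "M2 \<le> M1" and "K \<le> M2" and "1 \<le> K"
    and "\<alpha> > 0" and "\<beta> > 0"
    and "is_FL_test M1 M2 K \<alpha> \<beta> dec"
    and "l \<in> kmatches M1 M2 K"
    and "inj_on P {..<M1}" and "inj_on Q {..<M2}"
    and "in_hyp M1 M2 l P Q"
  shows "Ef M1 M2 K \<alpha> \<beta> l P Q
           \<le> liminf (\<lambda>N. exponent_at
                (mismatch_prob M1 M2 (xiN \<alpha> N) (xiN \<beta> N) P Q l (dec N)) N)"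
proof (rule dense_le, goal_cases)
  case (1 x)
  show ?case
  proof (cases x)
    case (real e)
    let ?C = "\<lambda>N. (\<alpha> * real N + 2) ^ (CARD('a) * M1) * (\<beta> * real N + 2) ^ (CARD('a) * M2)"
    have "ereal e \<le> Ef M1 M2 K \<alpha> \<beta> l P Q" using 1 real by simp
    then have "\<forall>\<^sub>F N in sequentially. ereal (e - ln (?C N) / real N)
        \<le> exponent_at (mismatch_prob M1 M2 (xiN \<alpha> N) (xiN \<beta> N) P Q l (dec N)) N"
      using assms(4-7)
      by (intro eventually_sequentiallyI[of 1] exponent_at_ge mismatch_prob_nonneg mismatch_prob_le)
        simp_all
    then show ?thesis
      unfolding real by (rule ereal_le_liminf_of_eventually[OF tendsto_ln_powers_div[OF assms(4,5)]])
  qed (use 1 in simp_all)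
qed

end
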